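(* Let $k\ge 0$. For every integer $n\ge 0$, $$\|E_{n+1}^k\|_{2,k}^2=\|E_{-n}^k\|_{2,k}^2=\pi\,2^{1-2k}\,n!\,\frac{\Gamma(n+2k+1)}{\Gamma(n+k+1)^2},$$ where $\|E_j^k\|_{2,k}^2=\int_{-\pi}^{\pi}|E_j^k(ix)|^2|\sin x|^{2k}dx$.
   Context: Fix $k\ge 0$. The Cherednik operator of type $A_1$ is $T^k f(x)=f'(x)+2k\,\frac{f(x)-f(-x)}{1-e^{-2x}}-k f(x)$ for $f\in C^1(\mathbb{R})$. On $\mathbb{Z}$ define the partial order $j\triangleleft n$ iff either ($|j|<|n|$ and $|n|-|j|$ is a positive even integer) or ($|j|=|n|$ and $n<j$). Let $dm_k(x)=|\sin x|^{2k}dx$ on $[-\pi,\pi]$ and $(f,g)_k=\int_{-\pi}^{\pi}f(x)\overline{g(x)}\,dm_k(x)$. For $n\in\mathbb{Z}$, the non-symmetric Heckman–Opdam polynomial $E_n^k$ is the unique function of the form $E_n^k(z)=e^{nz}+\sum_{j\triangleleft n}c_{n,j}e^{jz}$ ($z\in\mathbb{C}$, finitely many $j$) such that $(E_n^k(i\cdot),e^{ij\cdot})_k=0$ for all $j\triangleleft n$. These satisfy $T^kE_n^k=n_kE_n^k$, where $n_k=n+k$ if $n>0$ and $n_k=n-k$ if $n\le 0$; also $E_0^k=1$, $E_1^k(x)=e^x$, the coefficients $c_{n,j}$ are real and nonnegative, and $\{x\mapsto E_n^k(ix)\}_{n\in\mathbb{Z}}$ is an orthogonal basis of $L^2([-\pi,\pi],dm_k)$.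 *)

theory Defs
  imports "HOL-Analysis.Analysis"
begin

definition tri :: "int \<Rightarrow> int \<Rightarrow> bool" where
  "tri j n \<longleftrightarrow> (\<bar>j\<bar> < \<bar>n\<bar> \<and> even (\<bar>n\<bar> - \<bar>j\<bar>)) \<or> (\<bar>j\<bar> = \<bar>n\<bar> \<and> n < j)"

text \<open>Weight |sin x|^(2k) (with the convention 0^0 = 1).\<close>
definition wk :: "real \<Rightarrow> real \<Rightarrow> real" where
  "wk k x = (if k = 0 then 1 else \<bar>sin x\<bar> powr (2 * k))"

definition ipk :: "real \<Rightarrow> (real \<Rightarrow> complex) \<Rightarrow> (real \<Rightarrow> complex) \<Rightarrow> complex" where
  "ipk k f g = integral {-pi..pi} (\<lambda>x. f x * cnj (g x) * complex_of_real (wk k x))"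

definition expoly :: "int \<Rightarrow> (int \<Rightarrow> complex) \<Rightarrow> complex \<Rightarrow> complex" where
  "expoly n c z = (\<Sum>j\<in>{-\<bar>n\<bar>..\<bar>n\<bar>}. c j * exp (of_int j * z))"

definition E_coeffs :: "real \<Rightarrow> int \<Rightarrow> (int \<Rightarrow> complex) \<Rightarrow> bool" where
  "E_coeffs k n c \<longleftrightarrow> c n = 1 \<and> (\<forall>j. j \<noteq> n \<and> \<not> tri j n \<longrightarrow> c j = 0) \<and>
     (\<forall>j. tri j n \<longrightarrow>
        ipk k (\<lambda>x. expoly n c (\<i> * of_real x)) (\<lambda>x. exp (\<i> * of_real (of_int j * x))) = 0)"

definition HO_E :: "real \<Rightarrow> int \<Rightarrow> complex \<Rightarrow> complex" where
  "HO_E k n = expoly n (THE c. E_coeffs k n c)"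

definition HO_normsq :: "real \<Rightarrow> int \<Rightarrow> real" where
  "HO_normsq k n = integral {-pi..pi} (\<lambda>x. (cmod (HO_E k n (\<i> * of_real x)))\<^sup>2 * wk k x)"

end

theory Submission
  imports Defs
begin

text \<open>
  With \<open>a_p = binom n p (k+1)_p (k)_(n-p) / (k+1)_n\<close>, the candidates
  \<open>E_(n+1) = \<Sum>_p a_p e^((2p-n+1)z)\<close> and \<open>E_(-n) = \<Sum>_p a_p e^((n-2p)z)\<close> have the required
  leading term and support. Since the weight is even, their inner products with the
  exponentials \<open>e^(i(2q-n+1)x)\<close>, resp. \<open>e^(i(n-2q)x)\<close>, both equal \<open>2 S(q)\<close>, where
  \<open>S(q) = \<Sum>_p a_p M(p-q)\<close> and \<open>M(j) = \<integral>_0^\<pi> sin^(2k) x cos 2jx dx\<close> satisfies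
  \<open>(j+k+1) M(j+1) = (j-k) M(j)\<close>. A telescoping identity in \<open>q\<close> shows \<open>S(q) = 0\<close> for
  \<open>0 \<le> q < n\<close>, so the candidates are the Heckman--Opdam polynomials (which orthogonality
  determines uniquely), and both squared norms equal \<open>2 S(n)\<close>. The recursion
  \<open>a_p^(n+1) = a_(p-1)^n + k/(n+k+1) a_(n-p)^n\<close> yields
  \<open>S(n) = M(0) \<Prod>_(j<n) (j+1)(j+2k+1)/(j+k+1)^2\<close>, and \<open>M(0)\<close> is a Beta integral, evaluated
  by Legendre's duplication formula.
\<close>

section \<open>Moments of the weight\<close>

lemma wk_nonneg: "wk k x \<ge> 0"
  by (simp add: wk_def)

lemma wk_minus: "wk k (- x) = wk k x"
  by (simp add: wk_def)

lemma wk_pos: "sin x \<noteq> 0 \<Longrightarrow> wk k x > 0"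
  by (auto simp: wk_def)

lemma wk_eq_sin_powr:
  assumes "0 < x" "x < pi"
  shows "wk k x = sin x powr (2 * k)"
  using sin_gt_zero[OF assms] by (auto simp: wk_def)

lemma continuous_on_wk:
  assumes "k \<ge> 0"
  shows "continuous_on S (wk k)"
proof (cases "k = 0")
  case True
  then show ?thesis by (simp add: wk_def)
next
  case False
  then have "wk k = (\<lambda>x. \<bar>sin x\<bar> powr (2 * k))" by (auto simp: wk_def)
  moreover have "continuous_on S (\<lambda>x. \<bar>sin x\<bar> powr (2 * k))"
    using False assms by (intro continuous_on_powr' continuous_intros) auto
  ultimately show ?thesis by simp
qed

lemma continuous_on_wk_complex:
  "k \<ge> 0 \<Longrightarrow> continuous_on S (\<lambda>x. complex_of_real (wk k x))"
  using continuous_on_of_real[OF continuous_on_wk] .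

definition cos_moment :: "real \<Rightarrow> real \<Rightarrow> real" where
  "cos_moment k m = integral {0..pi} (\<lambda>x. wk k x * cos (m * x))"

lemma has_integral_cos_moment:
  "k \<ge> 0 \<Longrightarrow> ((\<lambda>x. wk k x * cos (m * x)) has_integral cos_moment k m) {0..pi}"
  unfolding cos_moment_def
  by (intro integrable_integral integrable_continuous_interval continuous_intros continuous_on_wk)

lemma cos_moment_minus [simp]: "cos_moment k (- m) = cos_moment k m"
  by (simp add: cos_moment_def)

lemma cos_moment_derivative_identity:
  fixes k m x :: real
  shows "2 * ((2*k + 1) * cos x * cos ((m+1) * x) - (m+1) * sin x * sin ((m+1) * x))
       = (m + 2*k + 2) * cos ((m+2) * x) - (m - 2*k) * cos (m * x)"
proof -
  define u where "u = (m+1) * x"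
  have "(m+2) * x = u + x" "m * x = u - x"
    unfolding u_def by algebra+
  then show ?thesis
    unfolding u_def[symmetric] by (simp only: cos_add cos_diff) (simp add: algebra_simps)
qed

text \<open>Integrate the derivative of \<open>sin x powr (2k+1) * cos ((m+1) x)\<close>, which vanishes at
  both ends of \<open>[0, pi]\<close>.\<close>
lemma cos_moment_recurrence:
  assumes k: "k \<ge> 0"
  shows "(m + 2*k + 2) * cos_moment k (m + 2) = (m - 2*k) * cos_moment k m"
proof -
  define F where "F x = 2 * (sin x powr (2*k + 1) * cos ((m+1) * x))" for x
  define f where "f x = (m + 2*k + 2) * (wk k x * cos ((m+2) * x)) - (m - 2*k) * (wk k x * cos (m * x))" for x
  have "(F has_vector_derivative f x) (at x)" if x: "x \<in> {0<..<pi}" for x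
  proof -
    have s: "sin x > 0" using x by (simp add: sin_gt_zero)
    have "((\<lambda>x. sin x powr (2*k + 1)) has_real_derivative (2*k + 1) * sin x powr (2*k) * cos x) (at x)"
      using DERIV_fun_powr[OF DERIV_sin s, of "2*k + 1"] by simp
    then have "(F has_real_derivative 2 * (
        (2*k + 1) * sin x powr (2*k) * cos x * cos ((m+1) * x)
          + (- sin ((m+1) * x) * (m+1)) * sin x powr (2*k + 1))) (at x)"
      unfolding F_def by (intro DERIV_cmult DERIV_mult) (auto intro!: derivative_eq_intros)
    moreover have "sin x powr (2*k + 1) = sin x powr (2*k) * sin x"
      using s by (simp add: powr_add)
    moreover have "wk k x = sin x powr (2*k)"
      using x by (simp add: wk_eq_sin_powr)
    moreover have "f x = wk k x * ((m + 2*k + 2) * cos ((m+2) * x) - (m - 2*k) * cos (m * x))"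
      unfolding f_def by (simp only: right_diff_distrib mult.left_commute)
    ultimately have "(F has_real_derivative f x) (at x)"
      unfolding cos_moment_derivative_identity[symmetric]
      by (auto elim!: DERIV_cong simp: algebra_simps)
    then show ?thesis
      by (simp add: has_real_derivative_iff_has_vector_derivative)
  qed
  moreover have "continuous_on {0..pi} F"
    unfolding F_def using k
    by (intro continuous_intros continuous_on_powr') (auto simp: sin_ge_zero)
  ultimately have "(f has_integral (F pi - F 0)) {0..pi}"
    by (intro fundamental_theorem_of_calculus_interior) auto
  moreover have "(f has_integral
      (m + 2*k + 2) * cos_moment k (m + 2) - (m - 2*k) * cos_moment k m) {0..pi}"
    unfolding f_def by (intro has_integral_diff has_integral_mult_right has_integral_cos_moment k)
  ultimately have "F pi - F 0 = (m + 2*k + 2) * cos_moment k (m + 2) - (m - 2*k) * cos_moment k m"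
    by (rule has_integral_unique)
  moreover have "F pi - F 0 = 0"
    by (simp add: F_def)
  ultimately show ?thesis
    by simp
qed

lemma Gamma_legendre_duplication_real:
  fixes x :: real
  assumes "x > 0"
  shows "Gamma x * Gamma (x + 1/2) = 2 powr (1 - 2*x) * sqrt pi * Gamma (2*x)"
proof -
  have "complex_of_real x \<notin> \<int>\<^sub>\<le>\<^sub>0" "complex_of_real (x + 1/2) \<notin> \<int>\<^sub>\<le>\<^sub>0"
    unfolding of_real_in_nonpos_Ints_iff using assms by auto
  then have "complex_of_real x \<notin> \<int>\<^sub>\<le>\<^sub>0" "complex_of_real x + 1/2 \<notin> \<int>\<^sub>\<le>\<^sub>0"
    by simp_all
  from Gamma_legendre_duplication[OF this]
  have "complex_of_real (Gamma x * Gamma (x + 1/2))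
      = complex_of_real (exp ((1 - 2*x) * ln 2) * sqrt pi * Gamma (2*x))"
    by (simp flip: Gamma_complex_of_real exp_of_real)
  then show ?thesis
    by (simp only: of_real_eq_iff) (simp add: powr_def)
qed

lemma Beta_integrand_haversine:
  fixes k x :: real
  assumes "0 < x" "x < pi"
  shows "((1 - cos x)/2) powr (k - 1/2) * (1 - (1 - cos x)/2) powr (k - 1/2) * (sin x / 2)
       = sin x powr (2*k) / 2 powr (2*k)"
proof -
  define y where "y = sin x / 2"
  have y: "y > 0"
    using sin_gt_zero[OF assms] by (simp add: y_def)
  have "((1 - cos x)/2) * (1 - (1 - cos x)/2) = (1 - (cos x)^2) / 4"
    by (simp add: field_simps power2_eq_square)
  also have "\<dots> = y powr 2"
    using y by (simp add: y_def sin_squared_eq[symmetric] powr_realpow power_divide)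
  finally have sq: "((1 - cos x)/2) * (1 - (1 - cos x)/2) = y powr 2" .
  have "((1 - cos x)/2) powr (k - 1/2) * (1 - (1 - cos x)/2) powr (k - 1/2)
      = (((1 - cos x)/2) * (1 - (1 - cos x)/2)) powr (k - 1/2)"
    using cos_le_one[of x] cos_ge_minus_one[of x] by (intro powr_mult[symmetric])
  also have "\<dots> = y powr (2*k - 1)"
    unfolding sq by (simp add: powr_powr algebra_simps)
  finally have "((1 - cos x)/2) powr (k - 1/2) * (1 - (1 - cos x)/2) powr (k - 1/2) = y powr (2*k - 1)" .
  then have "((1 - cos x)/2) powr (k - 1/2) * (1 - (1 - cos x)/2) powr (k - 1/2) * y = y powr (2*k)"
    using y by (simp add: powr_diff)
  then show ?thesis
    using y by (simp add: y_def powr_divide)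
qed

text \<open>The substitution \<open>t = (1 - cos x) / 2\<close> turns \<open>cos_moment k 0\<close> into a Beta integral.\<close>
lemma cos_moment_zero_eq_Beta:
  assumes k: "k \<ge> 0"
  shows "cos_moment k 0 = 2 powr (2*k) * Beta (k + 1/2) (k + 1/2)"
proof -
  define a where "a = k + 1/2"
  have a: "a > 0" using k unfolding a_def by simp
  define f where "f t = t powr (a - 1) * (1 - t) powr (a - 1)" for t :: real
  define g where "g x = (1 - cos x) / 2" for x :: real
  have int_f: "set_integrable lborel {0..1} f"
    unfolding f_def by (rule integrable_Beta[OF a a])
  have "(g has_real_derivative (sin x / 2)) (at x)" for x
    unfolding g_def by (auto intro!: derivative_eq_intros)
  moreover have "continuous_on {0..pi} (\<lambda>x. sin x / 2)"
    by (intro continuous_intros) auto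
  moreover have "sin x / 2 \<ge> 0" if "x \<in> {0..pi}" for x
    using that by (simp add: sin_ge_zero)
  moreover have "g 0 = 0" "g pi = 1"
    by (simp_all add: g_def)
  ultimately have subst: "set_integrable lborel {0..pi} (\<lambda>x. f (g x) * (sin x / 2))"
      "(LBINT x. f x * indicator {0..1} x) = (LBINT x. f (g x) * (sin x / 2) * indicator {0..pi} x)"
    using integral_substitution[of g 0 pi f "\<lambda>x. sin x / 2"] int_f by auto
  have "Beta a a = integral {0..1} f"
    using has_integral_Beta_real[OF a a] unfolding f_def by (simp add: integral_unique)
  also have "\<dots> = (LBINT x. f x * indicator {0..1} x)"
    using set_borel_integral_eq_integral(2)[OF int_f]
    by (simp add: set_lebesgue_integral_def mult.commute)
  also have "\<dots> = integral {0..pi} (\<lambda>x. f (g x) * (sin x / 2))"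
    using set_borel_integral_eq_integral(2)[OF subst(1)] subst(2)
    by (simp add: set_lebesgue_integral_def mult.commute)
  also have "\<dots> = integral {0..pi} (\<lambda>x. wk k x / 2 powr (2*k))"
  proof (rule integral_spike[of "{0, pi}"])
    fix x assume "x \<in> {0..pi} - {0, pi}"
    then have "0 < x" "x < pi" by auto
    then show "wk k x / 2 powr (2*k) = f (g x) * (sin x / 2)"
      using Beta_integrand_haversine[of x k]
      by (simp add: f_def g_def a_def wk_eq_sin_powr)
  qed auto
  also have "\<dots> = cos_moment k 0 / 2 powr (2*k)"
    by (simp add: cos_moment_def)
  finally show ?thesis
    by (simp add: a_def)
qed

lemma cos_moment_zero:
  assumes k: "k \<ge> 0"
  shows "cos_moment k 0 = pi * Gamma (2*k + 1) / (2 powr (2*k) * Gamma (k + 1)^2)"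
proof -
  define G where "G = Gamma (k + 1/2)"
  define H where "H = Gamma (k + 1)"
  define K where "K = Gamma (2*k + 1)"
  define t where "t = (2::real) powr (2*k)"
  have pos: "H > 0" "K > 0" "t > 0"
    using k by (simp_all add: H_def K_def t_def)
  have "G * H = 2 powr (1 - 2*(k + 1/2)) * sqrt pi * K"
    using Gamma_legendre_duplication_real[of "k + 1/2"] k
    by (simp add: G_def H_def K_def algebra_simps)
  also have "2 powr (1 - 2*(k + 1/2)) = 1 / t"
    by (simp add: t_def powr_minus divide_simps)
  finally have G: "G = sqrt pi * K / (t * H)"
    using pos by (simp add: field_simps)
  have "cos_moment k 0 = t * (G * G / K)"
    using cos_moment_zero_eq_Beta[OF k] by (simp add: Beta_def t_def G_def K_def algebra_simps)
  also have "\<dots> = pi * K / (t * H^2)"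
    using pos by (simp add: G field_simps power2_eq_square)
  finally show ?thesis
    by (simp add: t_def H_def K_def)
qed

definition fourier_moment :: "real \<Rightarrow> int \<Rightarrow> complex" where
  "fourier_moment k m =
     integral {-pi..pi} (\<lambda>x. exp (\<i> * of_real (of_int m * x)) * of_real (wk k x))"

lemma exp_i_add_exp_minus_i:
  "exp (\<i> * complex_of_real t) + exp (\<i> * complex_of_real (- t)) = complex_of_real (2 * cos t)"
  unfolding cis_conv_exp[symmetric] by (simp add: complex_eq_iff)

lemma fourier_moment_eq_cos_moment:
  assumes k: "k \<ge> 0"
  shows "fourier_moment k m = complex_of_real (2 * cos_moment k (of_int m))"
proof -
  define h where "h x = exp (\<i> * complex_of_real (of_int m * x)) * complex_of_real (wk k x)" for x
  have h_cont: "continuous_on S h" for S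
    unfolding h_def by (intro continuous_intros continuous_on_wk_complex k)
  then have h_int: "h integrable_on {a..b}" "(\<lambda>x. h (- x)) integrable_on {a..b}" for a b
    by (auto intro!: integrable_continuous_interval continuous_on_compose2[OF h_cont] continuous_intros)
  have "fourier_moment k m = integral {-pi..0} h + integral {0..pi} h"
    unfolding fourier_moment_def h_def[symmetric]
    by (rule Henstock_Kurzweil_Integration.integral_combine[symmetric]) (auto intro: h_int)
  also have "integral {-pi..0} h = integral {0..pi} (\<lambda>x. h (- x))"
    using Henstock_Kurzweil_Integration.integral_reflect_real[of pi 0 "\<lambda>x. h (- x)"] by simp
  also have "integral {0..pi} (\<lambda>x. h (- x)) + integral {0..pi} h = integral {0..pi} (\<lambda>x. h x + h (- x))"
    using integral_add[OF h_int] by (simp add: add.commute)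
  also have "\<dots> = integral {0..pi} (\<lambda>x. complex_of_real (2 * (wk k x * cos (of_int m * x))))"
    using exp_i_add_exp_minus_i[of "of_int m * _"]
    by (intro integral_cong) (simp add: h_def wk_minus distrib_right[symmetric])
  also have "\<dots> = complex_of_real (2 * cos_moment k (of_int m))"
    by (intro integral_unique has_integral_of_real has_integral_mult_right has_integral_cos_moment k)
  finally show ?thesis .
qed

lemma fourier_moment_unweighted: "fourier_moment 0 m = (if m = 0 then 2 * pi else 0)"
proof -
  have "exp (\<i> * complex_of_real t) * complex_of_real (wk 0 x)
      = complex_of_real (cos t) + \<i> * complex_of_real (sin t)" for t x
    unfolding cis_conv_exp[symmetric] by (simp add: wk_def complex_eq_iff)
  then have "fourier_moment 0 m = integral {-pi..pi}
      (\<lambda>x. complex_of_real (cos (of_int m * x)) + \<i> * complex_of_real (sin (of_int m * x)))"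
    by (simp only: fourier_moment_def)
  also have "\<dots> = complex_of_real (if m = 0 then 2 * pi else 0) + \<i> * complex_of_real 0"
    by (intro integral_unique has_integral_add has_integral_mult_right has_integral_of_real
        has_integral_cos_nx has_integral_sin_nx)
  finally show ?thesis
    by simp
qed

section \<open>The coefficients and their moment sums\<close>

definition HO_coeff :: "real \<Rightarrow> nat \<Rightarrow> int \<Rightarrow> real" where
  "HO_coeff k n p =
     (if 0 \<le> p \<and> p \<le> int n
      then real (n choose nat p) * pochhammer (k + 1) (nat p) * pochhammer k (n - nat p)
             / pochhammer (k + 1) n
      else 0)"

lemma HO_coeff_top:
  assumes "k \<ge> 0"
  shows "HO_coeff k n (int n) = 1"
proof -
  have "pochhammer (k + 1) n > 0"
    using assms by (intro pochhammer_pos) simp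
  then show ?thesis
    by (simp add: HO_coeff_def)
qed

lemma binomial_Suc_absorption_real:
  "real (n choose Suc m) * (real m + 1) = real (n choose m) * (real n - real m)"
proof (cases "m < n")
  case True
  have "(n choose Suc m) * Suc m = (n choose m) * (n - m)"
    using binomial_absorb_comp[of n m] binomial_absorption[of m n] by (simp add: mult.commute)
  then have "real ((n choose Suc m) * Suc m) = real ((n choose m) * (n - m))"
    by (simp only:)
  then show ?thesis
    using True by (simp add: of_nat_diff algebra_simps)
next
  case False
  then show ?thesis
    by (cases "m = n") (simp_all add: binomial_eq_0)
qed

lemma HO_coeff_ratio:
  "HO_coeff k n (p + 1) * ((of_int p + 1) * (k + of_nat n - of_int p - 1))
     = HO_coeff k n p * ((of_nat n - of_int p) * (k + 1 + of_int p))"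
proof -
  consider "p < -1" | "p = -1" | "0 \<le> p \<and> p < int n" | "p = int n" | "p > int n"
    by linarith
  then show ?thesis
  proof cases
    case 3
    then obtain m where m: "p = int m" "m < n"
      by (metis nonneg_int_cases of_nat_less_iff)
    define r where "r = n - Suc m"
    have r: "n - m = Suc r" "real r = real n - real m - 1"
      using m by (auto simp: r_def of_nat_diff)
    have "pochhammer (k + 1) (Suc m) = pochhammer (k + 1) m * (k + 1 + real m)"
      "pochhammer k (n - m) = pochhammer k r * (k + real n - real m - 1)"
      using r by (simp_all add: pochhammer_Suc)
    moreover have "nat (int m + 1) = Suc m" "n - Suc m = r"
      by (simp_all add: r_def)
    ultimately show ?thesis
      using m binomial_Suc_absorption_real[of n m] by (simp add: HO_coeff_def)
  qed (auto simp: HO_coeff_def)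
qed

lemma sum_int_telescope:
  fixes f :: "int \<Rightarrow> 'a::ab_group_add"
  shows "(\<Sum>p\<in>{0..int n}. f (p + 1) - f p) = f (int n + 1) - f 0"
proof (induction n)
  case (Suc n)
  have "{0..int (Suc n)} = insert (int n + 1) {0..int n}"
    by auto
  then show ?case
    using Suc by simp
qed simp

definition moment_sum :: "real \<Rightarrow> nat \<Rightarrow> (int \<Rightarrow> real) \<Rightarrow> int \<Rightarrow> real" where
  "moment_sum k n M q = (\<Sum>p\<in>{0..int n}. HO_coeff k n p * M (p - q))"

text \<open>A Zeilberger-type certificate: the summands of the combination in
  \<open>moment_sum_recurrence\<close> telescope against it, and it vanishes at \<open>p = 0\<close> and \<open>p = n + 1\<close>.\<close>
definition moment_certificate :: "real \<Rightarrow> nat \<Rightarrow> (int \<Rightarrow> real) \<Rightarrow> int \<Rightarrow> int \<Rightarrow> real" where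
  "moment_certificate k n M q p =
     HO_coeff k n p * ((of_nat n - 1 - of_int q - of_int p) * (of_int p - of_int q - 1 - k)
                       - (of_int q + 1 - of_nat n) * (of_int q + k + 1))
       * M (p - q - 1)"

lemma moment_certificate_diff:
  fixes M :: "int \<Rightarrow> real"
  assumes rel: "\<And>j. (of_int j + k + 1) * M (j + 1) = (of_int j - k) * M j"
  shows "moment_certificate k n M q (p + 1) - moment_certificate k n M q p
       = (of_int q + 1 - of_nat n) * (of_int q + k + 1) * (HO_coeff k n p * M (p - (q + 1)))
         + (of_int q + 1) * (k + of_nat n - of_int q) * (HO_coeff k n p * M (p - q))"
proof -
  define a0 a1 M0 M1 where "a0 = HO_coeff k n p" "a1 = HO_coeff k n (p + 1)"
    "M0 = M (p - q - 1)" "M1 = M (p - q)"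
  have a: "a1 * ((of_int p + 1) * (k + of_nat n - of_int p - 1))
      = a0 * ((of_nat n - of_int p) * (k + 1 + of_int p))"
    unfolding a0_a1_M0_M1_def by (rule HO_coeff_ratio)
  have m: "(of_int p - of_int q + k) * M1 = (of_int p - of_int q - 1 - k) * M0"
    using rel[of "p - q - 1"] unfolding a0_a1_M0_M1_def by (simp add: algebra_simps)
  have "moment_certificate k n M q (p + 1) - moment_certificate k n M q p
        - ((of_int q + 1 - of_nat n) * (of_int q + k + 1) * (a0 * M0)
           + (of_int q + 1) * (k + of_nat n - of_int q) * (a0 * M1))
     = (a1 * ((of_int p + 1) * (k + of_nat n - of_int p - 1))
          - a0 * ((of_nat n - of_int p) * (k + 1 + of_int p))) * M1
       + a0 * (of_nat n - 1 - of_int q - of_int p)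
           * ((of_int p - of_int q + k) * M1 - (of_int p - of_int q - 1 - k) * M0)"
    unfolding moment_certificate_def a0_a1_M0_M1_def by (simp add: algebra_simps)
  also have "\<dots> = 0"
    using a m by simp
  finally show ?thesis
    unfolding a0_a1_M0_M1_def by (simp add: algebra_simps)
qed

lemma moment_sum_recurrence:
  fixes M :: "int \<Rightarrow> real"
  assumes rel: "\<And>j. (of_int j + k + 1) * M (j + 1) = (of_int j - k) * M j"
  shows "(of_int q + 1 - of_nat n) * (of_int q + k + 1) * moment_sum k n M (q + 1)
       + (of_int q + 1) * (k + of_nat n - of_int q) * moment_sum k n M q = 0"
proof -
  have "(of_int q + 1 - of_nat n) * (of_int q + k + 1) * moment_sum k n M (q + 1)
       + (of_int q + 1) * (k + of_nat n - of_int q) * moment_sum k n M q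
      = (\<Sum>p\<in>{0..int n}. moment_certificate k n M q (p + 1) - moment_certificate k n M q p)"
    by (simp add: moment_sum_def sum_distrib_left sum.distrib[symmetric] moment_certificate_diff[OF rel])
  also have "\<dots> = moment_certificate k n M q (int n + 1) - moment_certificate k n M q 0"
    by (rule sum_int_telescope)
  also have "\<dots> = 0"
    by (simp add: moment_certificate_def HO_coeff_def algebra_simps)
  finally show ?thesis .
qed

lemma moment_sum_eq_0:
  fixes M :: "int \<Rightarrow> real"
  assumes rel: "\<And>j. (of_int j + k + 1) * M (j + 1) = (of_int j - k) * M j"
    and k: "k \<ge> 0" and q: "0 \<le> q" "q < int n"
  shows "moment_sum k n M q = 0"
  using q
proof (induction "nat (int n - 1 - q)" arbitrary: q)
  case 0
  then have q: "real_of_int q = real n - 1"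
    by simp
  have "of_int q + 1 - of_nat n = (0::real)"
    and c0: "(of_int q + 1) * (k + of_nat n - of_int q) = real n * (k + 1)"
    unfolding q by (simp_all add: algebra_simps)
  then have "real n * (k + 1) * moment_sum k n M q = 0"
    using moment_sum_recurrence[OF rel, of q n] by (simp only: c0 mult_zero_left add_0)
  then show ?case
    using 0 k by simp
next
  case (Suc d)
  then have "moment_sum k n M (q + 1) = 0"
    by (intro Suc.hyps) auto
  then have "(of_int q + 1) * (k + of_nat n - of_int q) * moment_sum k n M q = 0"
    using moment_sum_recurrence[OF rel, of q n] by simp
  moreover have "(of_int q + 1) * (k + of_nat n - of_int q) \<noteq> (0::real)"
    using Suc.prems k by auto
  ultimately show ?case
    by simp
qed

lemma pochhammer_Suc_real_plus1:
  "pochhammer (k + 1) (Suc j) = pochhammer (k + 1) j * (real j + k + 1)"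
  by (simp add: pochhammer_Suc algebra_simps)

lemma HO_coeff_Suc_interior:
  assumes k: "k \<ge> 0" and j: "j < n"
  shows "HO_coeff k (Suc n) (int j + 1)
       = HO_coeff k n (int j) + k / (real n + k + 1) * HO_coeff k n (int n - int j - 1)"
proof -
  define P where "P = pochhammer (k + 1) n"
  define r where "r = n - Suc j"
  have P: "P > 0" "real n + k + 1 > 0"
    using k by (auto simp: P_def intro!: pochhammer_pos)
  have idx: "nat (int j + 1) = Suc j" "nat (int n - int j - 1) = r" "n - j = Suc r"
    "Suc n - Suc j = Suc r" "n - r = Suc j"
    using j by (auto simp: r_def)
  have binom: "real (Suc n choose Suc j) = real (n choose j) + real (n choose Suc j)"
    "real (n choose r) = real (n choose Suc j)"
    using j by (auto simp: r_def binomial_symmetric[of "Suc j" n])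
  have "HO_coeff k (Suc n) (int j + 1)
      = real (Suc n choose Suc j) * pochhammer (k + 1) (Suc j) * pochhammer k (Suc r)
          / pochhammer (k + 1) (Suc n)"
    using j by (simp add: HO_coeff_def idx)
  also have "\<dots> = (real (n choose j) + real (n choose Suc j)) * (real j + k + 1) * k
          * pochhammer (k + 1) j * pochhammer (k + 1) r / (P * (real n + k + 1))"
    by (simp only: binom P_def pochhammer_Suc_real_plus1 pochhammer_rec[of k r]) (simp add: algebra_simps)
  also have "(real (n choose j) + real (n choose Suc j)) * (real j + k + 1)
      = real (n choose j) * (real n + k + 1) + k * real (n choose Suc j)"
    using binomial_Suc_absorption_real[of n j] j by (simp add: algebra_simps)
  also have "\<dots> * k * pochhammer (k + 1) j * pochhammer (k + 1) r / (P * (real n + k + 1))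
      = real (n choose j) * pochhammer (k + 1) j * (k * pochhammer (k + 1) r) / P
        + k / (real n + k + 1)
          * (real (n choose Suc j) * pochhammer (k + 1) r * (k * pochhammer (k + 1) j) / P)"
    using P by (simp add: divide_simps) (simp add: algebra_simps)
  also have "\<dots> = HO_coeff k n (int j) + k / (real n + k + 1) * HO_coeff k n (int n - int j - 1)"
    using j by (simp add: HO_coeff_def idx binom P_def pochhammer_rec[of k r] pochhammer_rec[of k j])
  finally show ?thesis .
qed

lemma HO_coeff_Suc:
  assumes k: "k \<ge> 0"
  shows "HO_coeff k (Suc n) p = HO_coeff k n (p - 1) + k / (real n + k + 1) * HO_coeff k n (int n - p)"
proof -
  have P: "pochhammer (k + 1) n > 0" "pochhammer (k + 1) (Suc n) > 0" "real n + k + 1 > 0"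
    using k by (auto intro!: pochhammer_pos)
  consider "p < 0" | "p = 0" | "1 \<le> p \<and> p \<le> int n" | "p = int n + 1" | "p > int n + 1"
    by linarith
  then show ?thesis
  proof cases
    case 2
    have "pochhammer (k + 1) (Suc n) = pochhammer (k + 1) n * (real n + k + 1)"
      "pochhammer k (Suc n) = k * pochhammer (k + 1) n"
      by (rule pochhammer_Suc_real_plus1, rule pochhammer_rec)
    then show ?thesis
      using 2 P by (simp add: HO_coeff_def)
  next
    case 3
    define j where "j = nat (p - 1)"
    have "p = int j + 1" "j < n"
      using 3 by (auto simp: j_def)
    then show ?thesis
      using HO_coeff_Suc_interior[OF k, of j n] by (simp add: algebra_simps)
  next
    case 4
    then have "nat p = Suc n" "nat (p - 1) = n"
      by simp_all
    then show ?thesis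
      using 4 P by (simp add: HO_coeff_def)
  qed (simp_all add: HO_coeff_def)
qed

lemma moment_sum_Suc:
  assumes k: "k \<ge> 0" and M_even: "\<And>j. M (- j) = M j"
  shows "moment_sum k (Suc n) M q
       = moment_sum k n M (q - 1) + k / (real n + k + 1) * moment_sum k n M (int n - q)"
proof -
  have "(\<Sum>p\<in>{0..int (Suc n)}. HO_coeff k n (p - 1) * M (p - q))
      = (\<Sum>p\<in>{-1..int n}. HO_coeff k n p * M (p - (q - 1)))"
    by (rule sum.reindex_bij_witness[where i="\<lambda>p. p + 1" and j="\<lambda>p. p - 1"]) (auto simp: algebra_simps)
  also have "\<dots> = moment_sum k n M (q - 1)"
    unfolding moment_sum_def by (intro sum.mono_neutral_right) (auto simp: HO_coeff_def)
  finally have first: "(\<Sum>p\<in>{0..int (Suc n)}. HO_coeff k n (p - 1) * M (p - q)) = moment_sum k n M (q - 1)" .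
  have "(\<Sum>p\<in>{0..int (Suc n)}. HO_coeff k n (int n - p) * M (p - q))
      = (\<Sum>p\<in>{-1..int n}. HO_coeff k n p * M (p - (int n - q)))"
    by (rule sum.reindex_bij_witness[where i="\<lambda>p. int n - p" and j="\<lambda>p. int n - p"])
      (auto simp: M_even[of "_ - q", symmetric] algebra_simps)
  also have "\<dots> = moment_sum k n M (int n - q)"
    unfolding moment_sum_def by (intro sum.mono_neutral_right) (auto simp: HO_coeff_def)
  finally have second: "(\<Sum>p\<in>{0..int (Suc n)}. HO_coeff k n (int n - p) * M (p - q))
      = moment_sum k n M (int n - q)" .
  show ?thesis
    unfolding moment_sum_def[of k "Suc n"] HO_coeff_Suc[OF k] first[symmetric] second[symmetric]
    by (simp add: sum.distrib sum_distrib_left algebra_simps)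
qed

lemma moment_sum_top:
  fixes M :: "int \<Rightarrow> real"
  assumes rel: "\<And>j. (of_int j + k + 1) * M (j + 1) = (of_int j - k) * M j"
    and M_even: "\<And>j. M (- j) = M j" and k: "k \<ge> 0"
  shows "moment_sum k n M (int n) = M 0 * (\<Prod>j<n. (real j + 1) * (real j + 2*k + 1) / (real j + k + 1)^2)"
proof (induction n)
  case 0
  then show ?case
    by (simp add: moment_sum_def HO_coeff_def)
next
  case (Suc n)
  define N where "N = real n + k + 1"
  define \<alpha> where "\<alpha> = k / N"
  have top: "moment_sum k (Suc n) M (int (Suc n)) = moment_sum k n M (int n) + \<alpha> * moment_sum k n M (-1)"
    using moment_sum_Suc[of k M n "int (Suc n)", OF k M_even] by (simp add: \<alpha>_def N_def)
  have "0 = moment_sum k (Suc n) M 0"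
    using moment_sum_eq_0[OF rel k, of 0 "Suc n"] by simp
  also have "\<dots> = moment_sum k n M (-1) + \<alpha> * moment_sum k n M (int n)"
    using moment_sum_Suc[of k M n 0, OF k M_even] by (simp add: \<alpha>_def N_def)
  finally have "moment_sum k n M (-1) = - \<alpha> * moment_sum k n M (int n)"
    by simp
  with top have "moment_sum k (Suc n) M (int (Suc n)) = moment_sum k n M (int n) * (1 - \<alpha>^2)"
    by (simp add: algebra_simps power2_eq_square)
  also have "1 - \<alpha>^2 = (N^2 - k^2) / N^2"
  proof -
    have "N > 0"
      using k by (simp add: N_def)
    then show ?thesis
      by (simp add: \<alpha>_def power_divide field_simps)
  qed
  also have "\<dots> = (real n + 1) * (real n + 2*k + 1) / (real n + k + 1)^2"
    unfolding N_def by (simp add: power2_eq_square algebra_simps)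
  finally show ?case
    by (simp add: Suc mult.assoc)
qed

lemma prod_eq_Gamma_quotient:
  fixes k :: real
  assumes k: "k \<ge> 0"
  shows "(\<Prod>j<n. (real j + 1) * (real j + 2*k + 1) / (real j + k + 1)^2) * (Gamma (2*k + 1) / Gamma (k + 1)^2)
       = fact n * Gamma (real n + 2*k + 1) / Gamma (real n + k + 1)^2"
proof (induction n)
  case (Suc n)
  define G1 where "G1 = Gamma (real n + 2*k + 1)"
  define G2 where "G2 = Gamma (real n + k + 1)"
  have Gamma_Suc: "Gamma (x + 1) = x * Gamma x" if "x > 0" for x :: real
    using that nonpos_Ints_nonpos[of x] by (intro Gamma_plus1) force
  have "(\<Prod>j<Suc n. (real j + 1) * (real j + 2*k + 1) / (real j + k + 1)^2) * (Gamma (2*k + 1) / Gamma (k + 1)^2)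
      = fact n * G1 / G2^2 * ((real n + 1) * (real n + 2*k + 1) / (real n + k + 1)^2)"
    using Suc.IH by (simp add: G1_def G2_def mult_ac)
  also have "\<dots> = fact (Suc n) * ((real n + 2*k + 1) * G1) / ((real n + k + 1) * G2)^2"
    by (simp add: power_mult_distrib mult_ac)
  also have "\<dots> = fact (Suc n) * Gamma (real (Suc n) + 2*k + 1) / Gamma (real (Suc n) + k + 1)^2"
    using Gamma_Suc[of "real n + 2*k + 1"] Gamma_Suc[of "real n + k + 1"] k
    by (simp add: G1_def G2_def add_ac)
  finally show ?case .
qed simp

section \<open>Exponential polynomials and uniqueness\<close>

lemma continuous_on_expoly: "continuous_on S (\<lambda>x. expoly N c (\<i> * complex_of_real x))"
  unfolding expoly_def by (intro continuous_intros)

lemma ipk_expoly_exp: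
  assumes k: "k \<ge> 0"
  shows "ipk k (\<lambda>x. expoly N c (\<i> * complex_of_real x)) (\<lambda>x. exp (\<i> * complex_of_real (of_int j * x)))
       = (\<Sum>l\<in>{-\<bar>N\<bar>..\<bar>N\<bar>}. c l * fourier_moment k (l - j))"
proof -
  have "exp (of_int l * (\<i> * complex_of_real x)) * cnj (exp (\<i> * complex_of_real (of_int j * x)))
      = exp (\<i> * complex_of_real (of_int (l - j) * x))" for l x
    unfolding exp_cnj by (simp add: exp_add[symmetric] algebra_simps)
  then have "expoly N c (\<i> * complex_of_real x) * cnj (exp (\<i> * complex_of_real (of_int j * x)))
          * complex_of_real (wk k x)
      = (\<Sum>l\<in>{-\<bar>N\<bar>..\<bar>N\<bar>}. c l * (exp (\<i> * complex_of_real (of_int (l - j) * x)) * complex_of_real (wk k x)))"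
    for x
    unfolding expoly_def sum_distrib_right by (simp only: mult.assoc)
  moreover have "(\<lambda>x. c l * (exp (\<i> * complex_of_real (of_int (l - j) * x)) * complex_of_real (wk k x)))
      integrable_on {-pi..pi}" for l
    by (intro integrable_continuous_interval continuous_intros continuous_on_wk_complex k)
  ultimately show ?thesis
    by (simp add: ipk_def integral_sum fourier_moment_def)
qed

lemma integral_norm_expoly:
  assumes k: "k \<ge> 0"
  shows "complex_of_real (integral {-pi..pi} (\<lambda>x. (cmod (expoly N c (\<i> * complex_of_real x)))^2 * wk k x))
       = (\<Sum>j\<in>{-\<bar>N\<bar>..\<bar>N\<bar>}. cnj (c j) * ipk k (\<lambda>x. expoly N c (\<i> * complex_of_real x))
                                              (\<lambda>x. exp (\<i> * complex_of_real (of_int j * x))))"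
proof -
  define F where "F x = expoly N c (\<i> * complex_of_real x)" for x
  have F_cont: "continuous_on S F" for S
    unfolding F_def by (rule continuous_on_expoly)
  have cnj_F: "cnj (F x) = (\<Sum>j\<in>{-\<bar>N\<bar>..\<bar>N\<bar>}. cnj (c j) * cnj (exp (\<i> * complex_of_real (of_int j * x))))" for x
    by (simp add: F_def expoly_def mult.commute mult.left_commute)
  have "complex_of_real (integral {-pi..pi} (\<lambda>x. (cmod (F x))^2 * wk k x))
      = integral {-pi..pi} (\<lambda>x. complex_of_real ((cmod (F x))^2 * wk k x))"
    by (intro integral_unique[symmetric] has_integral_of_real integrable_integral
        integrable_continuous_interval continuous_intros continuous_on_wk k F_cont)
  also have "\<dots> = integral {-pi..pi} (\<lambda>x. \<Sum>j\<in>{-\<bar>N\<bar>..\<bar>N\<bar>}.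
        cnj (c j) * (F x * cnj (exp (\<i> * complex_of_real (of_int j * x))) * complex_of_real (wk k x)))"
  proof (rule integral_cong)
    fix x
    have "complex_of_real ((cmod (F x))^2 * wk k x) = F x * cnj (F x) * complex_of_real (wk k x)"
      unfolding of_real_mult complex_norm_square ..
    then show "complex_of_real ((cmod (F x))^2 * wk k x) = (\<Sum>j\<in>{-\<bar>N\<bar>..\<bar>N\<bar>}.
        cnj (c j) * (F x * cnj (exp (\<i> * complex_of_real (of_int j * x))) * complex_of_real (wk k x)))"
      unfolding cnj_F sum_distrib_left sum_distrib_right by (simp add: algebra_simps)
  qed
  also have "\<dots> = (\<Sum>j\<in>{-\<bar>N\<bar>..\<bar>N\<bar>}. cnj (c j) * ipk k F (\<lambda>x. exp (\<i> * complex_of_real (of_int j * x))))"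
    unfolding ipk_def
    by (subst integral_sum) (auto intro!: integrable_continuous_interval continuous_intros
        continuous_on_wk_complex k F_cont)
  finally show ?thesis
    unfolding F_def .
qed

lemma expoly_coeff_eq_0:
  assumes "finite Z" and vanish: "\<And>x. x \<in> {-pi..pi} - Z \<Longrightarrow> expoly N d (\<i> * complex_of_real x) = 0"
    and l: "l \<in> {-\<bar>N\<bar>..\<bar>N\<bar>}"
  shows "d l = 0"
proof -
  define F where "F x = expoly N d (\<i> * complex_of_real x)" for x
  have "ipk 0 F (\<lambda>x. exp (\<i> * complex_of_real (of_int l * x))) = integral {-pi..pi} (\<lambda>x. 0)"
    unfolding ipk_def using \<open>finite Z\<close> vanish by (intro integral_spike[of Z]) (auto simp: F_def)
  moreover have "ipk 0 F (\<lambda>x. exp (\<i> * complex_of_real (of_int l * x)))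
      = (\<Sum>m\<in>{-\<bar>N\<bar>..\<bar>N\<bar>}. d m * fourier_moment 0 (m - l))"
    unfolding F_def by (rule ipk_expoly_exp) simp
  moreover have "\<dots> = (\<Sum>m\<in>{-\<bar>N\<bar>..\<bar>N\<bar>}. if m = l then d l * (2 * pi) else 0)"
    by (intro sum.cong) (auto simp: fourier_moment_unweighted)
  moreover have "\<dots> = d l * (2 * pi)"
    using l by simp
  ultimately show ?thesis
    by simp
qed

lemma expoly_eq_0_if_integral_norm_eq_0:
  assumes k: "k \<ge> 0"
    and norm0: "integral {-pi..pi} (\<lambda>x. (cmod (expoly N d (\<i> * complex_of_real x)))^2 * wk k x) = 0"
    and x: "x \<in> {-pi..pi}" "sin x \<noteq> 0"
  shows "expoly N d (\<i> * complex_of_real x) = 0"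
proof -
  define g where "g = (\<lambda>x. (cmod (expoly N d (\<i> * complex_of_real x)))^2 * wk k x)"
  have g_cont: "continuous_on {-pi..pi} g"
    unfolding g_def by (intro continuous_intros continuous_on_wk k continuous_on_expoly)
  then have "(g has_integral 0) {-pi..pi}"
    using norm0[folded g_def] integrable_integral[OF integrable_continuous_interval[OF g_cont]] by simp
  then have "g x = 0"
    using has_integral_0_cbox_imp_0[of "-pi" pi g x] g_cont x pi_gt_zero by (auto simp: g_def wk_nonneg)
  then show ?thesis
    using wk_pos[OF x(2), of k] by (simp add: g_def)
qed

lemma tri_imp_in_range: "tri j N \<Longrightarrow> j \<in> {-\<bar>N\<bar>..\<bar>N\<bar>}"
  unfolding tri_def by auto

text \<open>Such an exponential polynomial is orthogonal to itself, so it vanishes wherever the weight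
  is positive; its coefficients are then recovered by unweighted Fourier integrals.\<close>
lemma expoly_coeff_eq_0_if_orthogonal:
  assumes k: "k \<ge> 0"
    and supp: "\<And>j. j = N \<or> \<not> tri j N \<Longrightarrow> d j = 0"
    and orth: "\<And>j. tri j N \<Longrightarrow>
      ipk k (\<lambda>x. expoly N d (\<i> * complex_of_real x)) (\<lambda>x. exp (\<i> * complex_of_real (of_int j * x))) = 0"
  shows "d j = 0"
proof -
  define F where "F = (\<lambda>x. expoly N d (\<i> * complex_of_real x))"
  have "complex_of_real (integral {-pi..pi} (\<lambda>x. (cmod (F x))^2 * wk k x))
      = (\<Sum>j\<in>{-\<bar>N\<bar>..\<bar>N\<bar>}. cnj (d j) * ipk k F (\<lambda>x. exp (\<i> * complex_of_real (of_int j * x))))"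
    unfolding F_def by (rule integral_norm_expoly[OF k])
  also have "\<dots> = 0"
    using supp orth by (intro sum.neutral) (auto simp: F_def)
  finally have norm0: "integral {-pi..pi} (\<lambda>x. (cmod (F x))^2 * wk k x) = 0"
    by simp
  have F0: "F x = 0" if x: "x \<in> {-pi..pi} - {-pi, 0, pi}" for x
  proof -
    have "sin x \<noteq> 0"
      using x sin_eq_0_pi[of x] by auto
    with x show ?thesis
      unfolding F_def by (intro expoly_eq_0_if_integral_norm_eq_0[OF k norm0[unfolded F_def]]) auto
  qed
  show ?thesis
  proof (cases "j \<in> {-\<bar>N\<bar>..\<bar>N\<bar>}")
    case True
    show ?thesis
    proof (rule expoly_coeff_eq_0)
      show "finite {-pi, 0, pi}"
        by simp
      show "expoly N d (\<i> * complex_of_real x) = 0" if "x \<in> {-pi..pi} - {-pi, 0, pi}" for x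
        using F0[OF that] by (simp add: F_def)
    qed (rule True)
  next
    case False
    then show ?thesis
      using tri_imp_in_range[of j N] supp[of j] by auto
  qed
qed

lemma E_coeffs_unique:
  assumes k: "k \<ge> 0" and c: "E_coeffs k N c" and c': "E_coeffs k N c'"
  shows "c = c'"
proof -
  have "c j - c' j = 0" for j
  proof (rule expoly_coeff_eq_0_if_orthogonal[OF k])
    show "c i - c' i = 0" if "i = N \<or> \<not> tri i N" for i
      using that c c' unfolding E_coeffs_def by (cases "i = N") auto
    show "ipk k (\<lambda>x. expoly N (\<lambda>j. c j - c' j) (\<i> * complex_of_real x))
            (\<lambda>x. exp (\<i> * complex_of_real (of_int i * x))) = 0" if "tri i N" for i
      using c c' that unfolding E_coeffs_def ipk_expoly_exp[OF k]
      by (simp add: left_diff_distrib sum_subtractf)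
  qed
  then show ?thesis
    by auto
qed

lemma HO_E_eq_expoly:
  assumes "k \<ge> 0" and "E_coeffs k N c"
  shows "HO_E k N = expoly N c"
proof -
  have "(THE c. E_coeffs k N c) = c"
    using assms E_coeffs_unique by blast
  then show ?thesis
    by (simp add: HO_E_def)
qed

lemma HO_normsq_eq_ipk:
  assumes k: "k \<ge> 0" and c: "E_coeffs k N c"
  shows "complex_of_real (HO_normsq k N)
       = ipk k (\<lambda>x. expoly N c (\<i> * complex_of_real x)) (\<lambda>x. exp (\<i> * complex_of_real (of_int N * x)))"
proof -
  define I where "I j = ipk k (\<lambda>x. expoly N c (\<i> * complex_of_real x))
                              (\<lambda>x. exp (\<i> * complex_of_real (of_int j * x)))" for j
  have "cnj (c j) * I j = (if j = N then I N else 0)" for j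
    using c unfolding E_coeffs_def I_def by (cases "j = N"; cases "tri j N") auto
  moreover have "N \<in> {-\<bar>N\<bar>..\<bar>N\<bar>}"
    by arith
  ultimately have "(\<Sum>j\<in>{-\<bar>N\<bar>..\<bar>N\<bar>}. cnj (c j) * I j) = I N"
    by (simp only: sum.delta finite_atLeastAtMost_int if_True)
  then show ?thesis
    unfolding HO_normsq_def HO_E_eq_expoly[OF k c] integral_norm_expoly[OF k] I_def .
qed

section \<open>The polynomials \<open>E_(n+1)\<close> and \<open>E_(-n)\<close>\<close>

lemma tri_Suc_iff: "tri j (int n + 1) \<longleftrightarrow> (\<exists>q\<in>{0..<int n}. j = 2 * q - int n + 1)"
  unfolding tri_def abs_if Bex_def atLeastLessThan_iff by presburger

lemma tri_minus_iff: "tri j (- int n) \<longleftrightarrow> (\<exists>q\<in>{0..<int n}. j = int n - 2 * q)"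
  unfolding tri_def abs_if Bex_def atLeastLessThan_iff by presburger

lemma cos_moment_int_recurrence:
  assumes "k \<ge> 0"
  shows "(of_int j + k + 1) * cos_moment k (2 * of_int (j + 1)) = (of_int j - k) * cos_moment k (2 * of_int j)"
  using cos_moment_recurrence[OF assms, of "2 * of_int j"] by (simp add: algebra_simps)

text \<open>The coefficient function carrying \<open>HO_coeff k n p\<close> at the frequency \<open>s (2p - n) + t\<close>;
  \<open>s = t = 1\<close> gives \<open>E_(n+1)\<close> and \<open>s = -1, t = 0\<close> gives \<open>E_(-n)\<close>.\<close>
definition HO_coeffs :: "real \<Rightarrow> nat \<Rightarrow> int \<Rightarrow> int \<Rightarrow> int \<Rightarrow> complex" where
  "HO_coeffs k n s t j =
     (\<Sum>p\<in>{0..int n}. if s * (2 * p - int n) + t = j then complex_of_real (HO_coeff k n p) else 0)"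

lemma HO_coeffs_at:
  assumes "\<bar>s\<bar> = 1" "p \<in> {0..int n}"
  shows "HO_coeffs k n s t (s * (2 * p - int n) + t) = HO_coeff k n p"
proof -
  have "s * (2 * p' - int n) + t = s * (2 * p - int n) + t \<longleftrightarrow> p' = p" for p'
    using assms(1) by auto
  then show ?thesis
    using assms(2) by (simp add: HO_coeffs_def)
qed

lemma HO_coeffs_eq_0:
  assumes "\<And>p. p \<in> {0..int n} \<Longrightarrow> j \<noteq> s * (2 * p - int n) + t"
  shows "HO_coeffs k n s t j = 0"
proof -
  have "s * (2 * p - int n) + t \<noteq> j" if "p \<in> {0..int n}" for p
    using assms[OF that] by metis
  then show ?thesis
    by (simp add: HO_coeffs_def)
qed

lemma sum_HO_coeffs:
  assumes "finite L" "\<And>p. p \<in> {0..int n} \<Longrightarrow> s * (2 * p - int n) + t \<in> L"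
  shows "(\<Sum>l\<in>L. HO_coeffs k n s t l * f l)
       = (\<Sum>p\<in>{0..int n}. complex_of_real (HO_coeff k n p) * f (s * (2 * p - int n) + t))"
proof -
  have "(\<Sum>l\<in>L. HO_coeffs k n s t l * f l)
      = (\<Sum>l\<in>L. \<Sum>p\<in>{0..int n}. if s * (2 * p - int n) + t = l
                                      then complex_of_real (HO_coeff k n p) * f l else 0)"
    unfolding HO_coeffs_def sum_distrib_right by (intro sum.cong) auto
  also have "\<dots> = (\<Sum>p\<in>{0..int n}. \<Sum>l\<in>L. if s * (2 * p - int n) + t = l
                                      then complex_of_real (HO_coeff k n p) * f l else 0)"
    by (rule sum.swap)
  also have "\<dots> = (\<Sum>p\<in>{0..int n}. complex_of_real (HO_coeff k n p) * f (s * (2 * p - int n) + t))"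
    using assms by (intro sum.cong) (simp_all add: sum.delta)
  finally show ?thesis .
qed

lemma ipk_HO_coeffs:
  assumes k: "k \<ge> 0" and s: "\<bar>s\<bar> = 1"
    and range: "\<And>p. p \<in> {0..int n} \<Longrightarrow> s * (2 * p - int n) + t \<in> {-\<bar>N\<bar>..\<bar>N\<bar>}"
  shows "ipk k (\<lambda>x. expoly N (HO_coeffs k n s t) (\<i> * complex_of_real x))
            (\<lambda>x. exp (\<i> * complex_of_real (of_int (s * (2 * q - int n) + t) * x)))
       = complex_of_real (2 * moment_sum k n (\<lambda>j. cos_moment k (2 * of_int j)) q)"
proof -
  have moment: "fourier_moment k (s * (2 * p - int n) + t - (s * (2 * q - int n) + t))
      = complex_of_real (2 * cos_moment k (2 * of_int (p - q)))" for p
  proof -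
    have "(of_int (s * (2 * p - int n) + t - (s * (2 * q - int n) + t)) :: real)
        = of_int s * (2 * of_int (p - q))"
      by (simp add: algebra_simps)
    moreover have "of_int s = (1::real) \<or> of_int s = (-1::real)"
      using s by linarith
    ultimately show ?thesis
      using cos_moment_minus[of k "2 * of_int (p - q)"]
      by (auto simp: fourier_moment_eq_cos_moment[OF k] algebra_simps)
  qed
  have "ipk k (\<lambda>x. expoly N (HO_coeffs k n s t) (\<i> * complex_of_real x))
            (\<lambda>x. exp (\<i> * complex_of_real (of_int (s * (2 * q - int n) + t) * x)))
      = (\<Sum>p\<in>{0..int n}. complex_of_real (HO_coeff k n p)
            * fourier_moment k (s * (2 * p - int n) + t - (s * (2 * q - int n) + t)))"
    unfolding ipk_expoly_exp[OF k] by (intro sum_HO_coeffs range) simp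
  also have "\<dots> = complex_of_real (2 * moment_sum k n (\<lambda>j. cos_moment k (2 * of_int j)) q)"
    unfolding moment by (simp add: moment_sum_def sum_distrib_left mult.left_commute)
  finally show ?thesis .
qed

lemma E_coeffs_HO_coeffs:
  assumes k: "k \<ge> 0" and s: "\<bar>s\<bar> = 1"
    and range: "\<And>p. p \<in> {0..int n} \<Longrightarrow> s * (2 * p - int n) + t \<in> {-\<bar>s * int n + t\<bar>..\<bar>s * int n + t\<bar>}"
    and tri: "\<And>j. tri j (s * int n + t) \<longleftrightarrow> (\<exists>q\<in>{0..<int n}. j = s * (2 * q - int n) + t)"
  shows "E_coeffs k (s * int n + t) (HO_coeffs k n s t)"
  unfolding E_coeffs_def
proof (intro conjI allI impI)
  show "HO_coeffs k n s t (s * int n + t) = 1"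
    using HO_coeffs_at[OF s, of "int n" n k t] HO_coeff_top[OF k] by simp
next
  fix j
  assume "j \<noteq> s * int n + t \<and> \<not> tri j (s * int n + t)"
  then have "j \<noteq> s * (2 * p - int n) + t" if "p \<in> {0..int n}" for p
    using that tri[of j] by (cases "p = int n") auto
  then show "HO_coeffs k n s t j = 0"
    by (rule HO_coeffs_eq_0)
next
  fix j
  assume "tri j (s * int n + t)"
  then obtain q where q: "q \<in> {0..<int n}" "j = s * (2 * q - int n) + t"
    using tri by blast
  have "ipk k (\<lambda>x. expoly (s * int n + t) (HO_coeffs k n s t) (\<i> * complex_of_real x))
          (\<lambda>x. exp (\<i> * complex_of_real (of_int (s * (2 * q - int n) + t) * x)))
      = complex_of_real (2 * moment_sum k n (\<lambda>j. cos_moment k (2 * of_int j)) q)"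
    by (rule ipk_HO_coeffs[OF k s range])
  then show "ipk k (\<lambda>x. expoly (s * int n + t) (HO_coeffs k n s t) (\<i> * complex_of_real x))
                  (\<lambda>x. exp (\<i> * complex_of_real (of_int j * x))) = 0"
    using moment_sum_eq_0[OF cos_moment_int_recurrence[OF k] k, of q n] q by simp
qed

lemma HO_normsq_eq_moment_sum:
  assumes k: "k \<ge> 0" and s: "\<bar>s\<bar> = 1"
    and range: "\<And>p. p \<in> {0..int n} \<Longrightarrow> s * (2 * p - int n) + t \<in> {-\<bar>s * int n + t\<bar>..\<bar>s * int n + t\<bar>}"
    and tri: "\<And>j. tri j (s * int n + t) \<longleftrightarrow> (\<exists>q\<in>{0..<int n}. j = s * (2 * q - int n) + t)"
  shows "HO_normsq k (s * int n + t) = 2 * moment_sum k n (\<lambda>j. cos_moment k (2 * of_int j)) (int n)"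
proof -
  have "complex_of_real (HO_normsq k (s * int n + t))
      = ipk k (\<lambda>x. expoly (s * int n + t) (HO_coeffs k n s t) (\<i> * complex_of_real x))
              (\<lambda>x. exp (\<i> * complex_of_real (of_int (s * (2 * int n - int n) + t) * x)))"
    using HO_normsq_eq_ipk[OF k E_coeffs_HO_coeffs[OF k s range tri]] by simp
  also have "\<dots> = complex_of_real (2 * moment_sum k n (\<lambda>j. cos_moment k (2 * of_int j)) (int n))"
    by (rule ipk_HO_coeffs[OF k s range])
  finally show ?thesis
    by (simp only: of_real_eq_iff)
qed

theorem mainTheorem3:
  fixes k :: real and n :: nat
  assumes "k \<ge> 0"
  shows "HO_normsq k (int n + 1) = HO_normsq k (- int n) \<and>
         HO_normsq k (- int n) =
           pi * 2 powr (1 - 2 * k) * fact n * Gamma (real n + 2 * k + 1) / (Gamma (real n + k + 1))\<^sup>2"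
proof -
  define S where "S = moment_sum k n (\<lambda>j. cos_moment k (2 * of_int j)) (int n)"
  define P where "P = (\<Prod>j<n. (real j + 1) * (real j + 2*k + 1) / (real j + k + 1)^2)"
  have "HO_normsq k (1 * int n + 1) = 2 * S"
    unfolding S_def using assms by (intro HO_normsq_eq_moment_sum) (auto simp: tri_Suc_iff)
  then have succ: "HO_normsq k (int n + 1) = 2 * S"
    by simp
  have "HO_normsq k ((-1) * int n + 0) = 2 * S"
    unfolding S_def using assms by (intro HO_normsq_eq_moment_sum) (auto simp: tri_minus_iff)
  then have minus: "HO_normsq k (- int n) = 2 * S"
    by simp
  also have "2 * S = pi * 2 powr (1 - 2 * k) * (P * (Gamma (2*k + 1) / Gamma (k + 1)^2))"
    using moment_sum_top[OF cos_moment_int_recurrence[OF assms] _ assms, of n]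
    by (simp add: S_def P_def cos_moment_zero[OF assms] powr_diff field_simps)
  also have "P * (Gamma (2*k + 1) / Gamma (k + 1)^2)
      = fact n * Gamma (real n + 2 * k + 1) / Gamma (real n + k + 1)^2"
    unfolding P_def by (rule prod_eq_Gamma_quotient[OF assms])
  finally show ?thesis
    using succ minus by simp
qed

end
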